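(* Let $\Pi$ be the reversible combinator language described in the context. For every $\Pi$ combinator $c$ there is a $\Pi$ combinator $c^{\dagger}$ (its adjoint, depending only on $c$) such that for all values $v, v'$: if $c\;v \mapsto v'$ then $c^{\dagger}\;v' \mapsto v$.
   Context: The language $\Pi$. Types: $b ::= 0 \mid 1 \mid b+b \mid b\times b \mid \mathit{bool}$. Values: $v ::= () \mid \mathit{left}\,v \mid \mathit{right}\,v \mid (v,v) \mid \mathtt{T} \mid \mathtt{F}$, typed by: $() : 1$; $\mathit{left}\,v : b_1+b_2$ if $v:b_1$; $\mathit{right}\,v : b_1+b_2$ if $v:b_2$; $(v_1,v_2): b_1\times b_2$ if $v_i:b_i$; $\mathtt{T},\mathtt{F}:\mathit{bool}$ ($0$ has no values). Primitive combinators come in dual pairs, each pair written "$f : A \leftrightarrow B : g$" meaning $f: A\leftrightarrow B$ and $g : B \leftrightarrow A$, and each is the dual of the other: $\mathit{id}: b\leftrightarrow b:\mathit{id}$; $\mathit{unite}_+ : 0+b\leftrightarrow b : \mathit{uniti}_+$; $\mathit{swap}_+ : b_1+b_2 \leftrightarrow b_2+b_1 : \mathit{swap}_+$; $\mathit{assocl}_+ : b_1+(b_2+b_3)\leftrightarrow (b_1+b_2)+b_3 : \mathit{assocr}_+$; $\mathit{unite}_\times : 1\times b\leftrightarrow b : \mathit{uniti}_\times$; $\mathit{swap}_\times : b_1\times b_2\leftrightarrow b_2\times b_1:\mathit{swap}_\times$; $\mathit{assocl}_\times : b_1\times(b_2\times b_3)\leftrightarrow (b_1\times b_2)\times b_3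 : \mathit{assocr}_\times$; $\mathit{distrib}_0 : 0\times b \leftrightarrow 0 : \mathit{factor}_0$; $\mathit{distrib} : (b_1+b_2)\times b_3 \leftrightarrow (b_1\times b_3)+(b_2\times b_3) : \mathit{factor}$; $\mathit{toSum} : \mathit{bool}\leftrightarrow 1+1 : \mathit{toBool}$. Combinators: $c ::= \text{primitive} \mid c\circ c \mid c\oplus c \mid c\otimes c$, with $c_1\circ c_2 : b_1\leftrightarrow b_3$ if $c_1:b_1\leftrightarrow b_2$, $c_2 : b_2\leftrightarrow b_3$; $c_1\oplus c_2 : b_1+b_2 \leftrightarrow b_3+b_4$ and $c_1\otimes c_2 : b_1\times b_2\leftrightarrow b_3\times b_4$ if $c_1 : b_1\leftrightarrow b_3$, $c_2 : b_2\leftrightarrow b_4$. Forward evaluation $c\;v\mapsto v'$ is the relation defined by: $\mathit{id}\,v\mapsto v$; $\mathit{unite}_+(\mathit{right}\,v)\mapsto v$; $\mathit{uniti}_+\,v\mapsto \mathit{right}\,v$; $\mathit{swap}_+(\mathit{left}\,v)\mapsto \mathit{right}\,v$; $\mathit{swap}_+(\mathit{right}\,v)\mapsto\mathit{left}\,v$; $\mathit{assocl}_+(\mathit{left}\,v_1)\mapsto \mathit{left}(\mathit{left}\,v_1)$; $\mathit{assocl}_+(\mathit{right}(\mathit{left}\,v_2))\mapsto \mathit{left}(\mathit{right}\,v_2)$; $\mathit{assocl}_+(\mathit{right}(\mathit{right}\,v_3))\mapsto\mathit{right}\,v_3$; $\mathit{assocr}_+(\mathit{left}(\mathit{left}\,v_1))\mapsto\mathit{left}\,v_1$;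 $\mathit{assocr}_+(\mathit{left}(\mathit{right}\,v_2))\mapsto \mathit{right}(\mathit{left}\,v_2)$; $\mathit{assocr}_+(\mathit{right}\,v_3)\mapsto\mathit{right}(\mathit{right}\,v_3)$; $\mathit{unite}_\times((),v)\mapsto v$; $\mathit{uniti}_\times\,v\mapsto((),v)$; $\mathit{swap}_\times(v_1,v_2)\mapsto(v_2,v_1)$; $\mathit{assocl}_\times(v_1,(v_2,v_3))\mapsto((v_1,v_2),v_3)$; $\mathit{assocr}_\times((v_1,v_2),v_3)\mapsto(v_1,(v_2,v_3))$; $\mathit{distrib}(\mathit{left}\,v_1,v_3)\mapsto\mathit{left}(v_1,v_3)$; $\mathit{distrib}(\mathit{right}\,v_2,v_3)\mapsto\mathit{right}(v_2,v_3)$; $\mathit{factor}(\mathit{left}(v_1,v_3))\mapsto(\mathit{left}\,v_1,v_3)$; $\mathit{factor}(\mathit{right}(v_2,v_3))\mapsto(\mathit{right}\,v_2,v_3)$; $\mathit{toSum}\,\mathtt{T}\mapsto\mathit{left}\,()$; $\mathit{toSum}\,\mathtt{F}\mapsto\mathit{right}\,()$; $\mathit{toBool}(\mathit{left}\,())\mapsto\mathtt{T}$; $\mathit{toBool}(\mathit{right}\,())\mapsto\mathtt{F}$ ($\mathit{distrib}_0,\mathit{factor}_0$ have no rules since $0$ is empty); and for composites: $(c_1\oplus c_2)(\mathit{left}\,v_1)\mapsto\mathit{left}\,v_2$ if $c_1 v_1\mapsto v_2$; $(c_1\oplus c_2)(\mathit{right}\,v_1)\mapsto\mathit{right}\,v_2$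 if $c_2 v_1\mapsto v_2$; $(c_1\otimes c_2)(v_1,v_2)\mapsto(v_3,v_4)$ if $c_1v_1\mapsto v_3$ and $c_2v_2\mapsto v_4$; $(c_1\circ c_2)v_1\mapsto v_2$ if $c_1 v_1\mapsto v$ and $c_2 v\mapsto v_2$ for some $v$. *)

theory Defs
  imports Main
begin

datatype ty = Zero | One | Plus ty ty | Times ty ty | Bool

datatype val = Unit | Left val | Right val | Pair val val | T | F

inductive has_ty :: "val \<Rightarrow> ty \<Rightarrow> bool" where
  "has_ty Unit One"
| "has_ty v b1 \<Longrightarrow> has_ty (Left v) (Plus b1 b2)"
| "has_ty v b2 \<Longrightarrow> has_ty (Right v) (Plus b1 b2)"
| "has_ty v1 b1 \<Longrightarrow> has_ty v2 b2 \<Longrightarrow> has_ty (Pair v1 v2) (Times b1 b2)"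
| "has_ty T Bool"
| "has_ty F Bool"

datatype comb =
    Id | UniteP | UnitiP | SwapP | AssoclP | AssocrP
  | UniteT | UnitiT | SwapT | AssoclT | AssocrT
  | Distrib0 | Factor0 | Distrib | Factor | ToSum | ToBool
  | Seq comb comb | Sum comb comb | Prod comb comb

inductive comb_ty :: "comb \<Rightarrow> ty \<Rightarrow> ty \<Rightarrow> bool" where
  "comb_ty Id b b"
| "comb_ty UniteP (Plus Zero b) b"
| "comb_ty UnitiP b (Plus Zero b)"
| "comb_ty SwapP (Plus b1 b2) (Plus b2 b1)"
| "comb_ty AssoclP (Plus b1 (Plus b2 b3)) (Plus (Plus b1 b2) b3)"
| "comb_ty AssocrP (Plus (Plus b1 b2) b3) (Plus b1 (Plus b2 b3))"
| "comb_ty UniteT (Times One b) b"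
| "comb_ty UnitiT b (Times One b)"
| "comb_ty SwapT (Times b1 b2) (Times b2 b1)"
| "comb_ty AssoclT (Times b1 (Times b2 b3)) (Times (Times b1 b2) b3)"
| "comb_ty AssocrT (Times (Times b1 b2) b3) (Times b1 (Times b2 b3))"
| "comb_ty Distrib0 (Times Zero b) Zero"
| "comb_ty Factor0 Zero (Times Zero b)"
| "comb_ty Distrib (Times (Plus b1 b2) b3) (Plus (Times b1 b3) (Times b2 b3))"
| "comb_ty Factor (Plus (Times b1 b3) (Times b2 b3)) (Times (Plus b1 b2) b3)"
| "comb_ty ToSum Bool (Plus One One)"
| "comb_ty ToBool (Plus One One) Bool"
| "comb_ty c1 b1 b2 \<Longrightarrow> comb_ty c2 b2 b3 \<Longrightarrow> comb_ty (Seq c1 c2) b1 b3"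
| "comb_ty c1 b1 b3 \<Longrightarrow> comb_ty c2 b2 b4 \<Longrightarrow> comb_ty (Sum c1 c2) (Plus b1 b2) (Plus b3 b4)"
| "comb_ty c1 b1 b3 \<Longrightarrow> comb_ty c2 b2 b4 \<Longrightarrow> comb_ty (Prod c1 c2) (Times b1 b2) (Times b3 b4)"

inductive eval :: "comb \<Rightarrow> val \<Rightarrow> val \<Rightarrow> bool" where
  "eval Id v v"
| "eval UniteP (Right v) v"
| "eval UnitiP v (Right v)"
| "eval SwapP (Left v) (Right v)"
| "eval SwapP (Right v) (Left v)"
| "eval AssoclP (Left v1) (Left (Left v1))"
| "eval AssoclP (Right (Left v2)) (Left (Right v2))"
| "eval AssoclP (Right (Right v3)) (Right v3)"
| "eval AssocrP (Left (Left v1)) (Left v1)"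
| "eval AssocrP (Left (Right v2)) (Right (Left v2))"
| "eval AssocrP (Right v3) (Right (Right v3))"
| "eval UniteT (Pair Unit v) v"
| "eval UnitiT v (Pair Unit v)"
| "eval SwapT (Pair v1 v2) (Pair v2 v1)"
| "eval AssoclT (Pair v1 (Pair v2 v3)) (Pair (Pair v1 v2) v3)"
| "eval AssocrT (Pair (Pair v1 v2) v3) (Pair v1 (Pair v2 v3))"
| "eval Distrib (Pair (Left v1) v3) (Left (Pair v1 v3))"
| "eval Distrib (Pair (Right v2) v3) (Right (Pair v2 v3))"
| "eval Factor (Left (Pair v1 v3)) (Pair (Left v1) v3)"
| "eval Factor (Right (Pair v2 v3)) (Pair (Right v2) v3)"
| "eval ToSum T (Left Unit)"
| "eval ToSum F (Right Unit)"
| "eval ToBool (Left Unit) T"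
| "eval ToBool (Right Unit) F"
| "eval c1 v1 v2 \<Longrightarrow> eval (Sum c1 c2) (Left v1) (Left v2)"
| "eval c2 v1 v2 \<Longrightarrow> eval (Sum c1 c2) (Right v1) (Right v2)"
| "eval c1 v1 v3 \<Longrightarrow> eval c2 v2 v4 \<Longrightarrow> eval (Prod c1 c2) (Pair v1 v2) (Pair v3 v4)"
| "eval c1 v1 v \<Longrightarrow> eval c2 v v2 \<Longrightarrow> eval (Seq c1 c2) v1 v2"

end

theory Submission
  imports Defs
begin

fun adjoint :: "comb \<Rightarrow> comb" where
  "adjoint Id = Id"
| "adjoint UniteP = UnitiP"
| "adjoint UnitiP = UniteP"
| "adjoint SwapP = SwapP"
| "adjoint AssoclP = AssocrP"
| "adjoint AssocrP = AssoclP"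
| "adjoint UniteT = UnitiT"
| "adjoint UnitiT = UniteT"
| "adjoint SwapT = SwapT"
| "adjoint AssoclT = AssocrT"
| "adjoint AssocrT = AssoclT"
| "adjoint Distrib0 = Factor0"
| "adjoint Factor0 = Distrib0"
| "adjoint Distrib = Factor"
| "adjoint Factor = Distrib"
| "adjoint ToSum = ToBool"
| "adjoint ToBool = ToSum"
| "adjoint (Seq c1 c2) = Seq (adjoint c2) (adjoint c1)"
| "adjoint (Sum c1 c2) = Sum (adjoint c1) (adjoint c2)"
| "adjoint (Prod c1 c2) = Prod (adjoint c1) (adjoint c2)"

lemma comb_ty_adjoint: "comb_ty c b1 b2 \<Longrightarrow> comb_ty (adjoint c) b2 b1"
  by (induction rule: comb_ty.induct) (auto intro: comb_ty.intros)

lemma eval_adjoint: "eval c v v' \<Longrightarrow> eval (adjoint c) v' v"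
  by (induction rule: eval.induct) (auto intro: eval.intros)

theorem proposition1:
  assumes "comb_ty c b1 b2"
  shows "\<exists>c'. comb_ty c' b2 b1 \<and> (\<forall>v v'. eval c v v' \<longrightarrow> eval c' v' v)"
proof (intro exI conjI allI impI)
  show "comb_ty (adjoint c) b2 b1"
    using assms by (rule comb_ty_adjoint)
  show "eval (adjoint c) v' v" if "eval c v v'" for v v'
    using that by (rule eval_adjoint)
qed

end
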